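(* Let $\mathcal{T}$ be a tree with costs $c:V(\mathcal{T})\to\mathbb{R}_{>0}$, and let $0<a<b$ with $c(v)\le b$ for all $v\in V(\mathcal{T})$, $2a\ge b$, and some vertex having $c(v)\le a$. Let $\mathcal{Z}$ be constructed as described, let $\mathcal{T}'$ be a connected component of $\mathcal{T}-\mathcal{Z}$, let $H$ be the unique heavy module with respect to $a$ contained in $\mathcal{T}'$, and let $D_H$ be the ranking-based decision tree of $\mathcal{T}'\langle H\rangle$. Then $\texttt{COST}_{D_H}(\mathcal{T}'\langle H\rangle,c)\le 2\cdot\texttt{OPT}(\mathcal{T},c)$.
   Context: Search model: a query to $v$ costs $c(v)$ and returns either that $v$ is the target or the component of (tree)$-v$ containing the target. A decision tree for a tree $T$ is (recursively) a rooted tree whose root is a vertex $v$ of $T$ and whose root subtrees are decision trees for the components of $T-v$, one per component; its cost is the maximum over targets $x$ of the total cost of the vertices on the root-to-$x$ path, and $\texttt{OPT}$ is the minimum cost. A heavy module with respect to $a$ is a set $H$ with $\mathcal{T}[H]$ connected, $c(v)>a$ for all $v\in H$, maximal with these properties. $\mathcal{T}\langle S\rangle$ denotes the minimal subtree containing $S$; $\mathcal{P}_{\mathcal{T}}(u,v)$ is the set of vertices strictly between $u$ and $v$ on their path. $\mathcal{X}$ contains one arbitrarily chosen vertex from each heavy module w.r.t. $a$; $\mathcal{Y}=\mathcal{X}\cup\{v\in V(\mathcal{T}\langle\mathcal{X}\rangle):\deg_{\mathcal{T}\langle\mathcal{X}\rangle}(v)\ge3\}$; $\mathcal{Z}$ is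 $\mathcal{Y}$ together with, for each pair $u,v\in\mathcal{Y}$ with $\mathcal{P}_{\mathcal{T}}(u,v)\ne\emptyset$ and $\mathcal{P}_{\mathcal{T}}(u,v)\cap\mathcal{Y}=\emptyset$, a minimum-cost vertex of $\mathcal{P}_{\mathcal{T}}(u,v)$. A vertex ranking of a tree is a labeling $l$ by positive integers such that whenever $u\ne v$ and $l(u)=l(v)$, some vertex $z$ strictly between $u$ and $v$ has $l(z)>l(v)$. The ranking-based decision tree of a tree is obtained from a vertex ranking with the minimum possible number of distinct labels by querying the unique vertex $z$ of largest label as root and attaching, recursively, the decision trees so obtained for the components of (tree)$-z$. *)

theory Defs
  imports Complex_Main
begin

text \<open>Graphs are given by an adjacency relation E on vertices; all trees considered
  are induced subgraphs of the input tree, represented by their vertex sets.\<close>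

definition connected_on :: "('a \<Rightarrow> 'a \<Rightarrow> bool) \<Rightarrow> 'a set \<Rightarrow> bool" where
  "connected_on E S \<longleftrightarrow>
     (\<forall>u\<in>S. \<forall>v\<in>S. (u, v) \<in> {(x, y). x \<in> S \<and> y \<in> S \<and> E x y}\<^sup>*)"

definition edges_on :: "('a \<Rightarrow> 'a \<Rightarrow> bool) \<Rightarrow> 'a set \<Rightarrow> 'a set set" where
  "edges_on E S = {{u, v} | u v. u \<in> S \<and> v \<in> S \<and> E u v}"

definition is_tree :: "('a \<Rightarrow> 'a \<Rightarrow> bool) \<Rightarrow> 'a set \<Rightarrow> bool" where
  "is_tree E V \<longleftrightarrow> finite V \<and> V \<noteq> {} \<and> (\<forall>u v. E u v \<longrightarrow> E v u) \<and> (\<forall>u. \<not> E u u)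
     \<and> connected_on E V \<and> card (edges_on E V) = card V - 1"

text \<open>Connected components of the subgraph induced by S (e.g. components of T - v
  are components E (V - {v})).\<close>
definition components :: "('a \<Rightarrow> 'a \<Rightarrow> bool) \<Rightarrow> 'a set \<Rightarrow> 'a set set" where
  "components E S = {C. C \<subseteq> S \<and> C \<noteq> {} \<and> connected_on E C \<and>
      (\<forall>D. C \<subseteq> D \<and> D \<subseteq> S \<and> connected_on E D \<longrightarrow> D = C)}"

definition steiner :: "('a \<Rightarrow> 'a \<Rightarrow> bool) \<Rightarrow> 'a set \<Rightarrow> 'a set \<Rightarrow> 'a set" where
  "steiner E W S = \<Inter>{U. S \<subseteq> U \<and> U \<subseteq> W \<and> connected_on E U}"

definition path_interior :: "('a \<Rightarrow> 'a \<Rightarrow> bool) \<Rightarrow> 'a set \<Rightarrow> 'a \<Rightarrow> 'a \<Rightarrow> 'a set" where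
  "path_interior E W u v = steiner E W {u, v} - {u, v}"

definition degree_in :: "('a \<Rightarrow> 'a \<Rightarrow> bool) \<Rightarrow> 'a set \<Rightarrow> 'a \<Rightarrow> nat" where
  "degree_in E W v = card {w \<in> W. E v w}"

datatype 'a dtree = DNode 'a "'a dtree list"

inductive is_dtree :: "('a \<Rightarrow> 'a \<Rightarrow> bool) \<Rightarrow> 'a set \<Rightarrow> 'a dtree \<Rightarrow> bool" for E where
  "v \<in> S \<Longrightarrow> distinct Cs \<Longrightarrow> set Cs = components E (S - {v}) \<Longrightarrow>
   list_all2 (is_dtree E) Cs ts \<Longrightarrow> is_dtree E S (DNode v ts)"

fun dpaths :: "'a dtree \<Rightarrow> 'a list set" where
  "dpaths (DNode v ts) = {[v]} \<union> (\<Union>t\<in>set ts. (\<lambda>p. v # p) ` dpaths t)"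

definition dcost :: "('a \<Rightarrow> real) \<Rightarrow> 'a dtree \<Rightarrow> real" where
  "dcost c D = Max ((\<lambda>p. sum_list (map c p)) ` dpaths D)"

definition OPT :: "('a \<Rightarrow> 'a \<Rightarrow> bool) \<Rightarrow> 'a set \<Rightarrow> ('a \<Rightarrow> real) \<Rightarrow> real" where
  "OPT E V c = (INF D \<in> {D. is_dtree E V D}. dcost c D)"

definition heavy_module :: "('a \<Rightarrow> 'a \<Rightarrow> bool) \<Rightarrow> 'a set \<Rightarrow> ('a \<Rightarrow> real) \<Rightarrow> real \<Rightarrow> 'a set \<Rightarrow> bool" where
  "heavy_module E V c a H \<longleftrightarrow> H \<subseteq> V \<and> H \<noteq> {} \<and> connected_on E H \<and> (\<forall>v\<in>H. c v > a) \<and>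
     (\<forall>H'. H \<subseteq> H' \<and> H' \<subseteq> V \<and> connected_on E H' \<and> (\<forall>v\<in>H'. c v > a) \<longrightarrow> H' = H)"

definition valid_X :: "('a \<Rightarrow> 'a \<Rightarrow> bool) \<Rightarrow> 'a set \<Rightarrow> ('a \<Rightarrow> real) \<Rightarrow> real \<Rightarrow> 'a set \<Rightarrow> bool" where
  "valid_X E V c a X \<longleftrightarrow> (\<exists>f. (\<forall>H. heavy_module E V c a H \<longrightarrow> f H \<in> H) \<and>
       X = f ` {H. heavy_module E V c a H})"

definition Yset :: "('a \<Rightarrow> 'a \<Rightarrow> bool) \<Rightarrow> 'a set \<Rightarrow> 'a set \<Rightarrow> 'a set" where
  "Yset E V X = X \<union> {v \<in> steiner E V X. degree_in E (steiner E V X) v \<ge> 3}"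

definition Z_pair :: "('a \<Rightarrow> 'a \<Rightarrow> bool) \<Rightarrow> 'a set \<Rightarrow> 'a set \<Rightarrow> 'a \<Rightarrow> 'a \<Rightarrow> bool" where
  "Z_pair E V Y u v \<longleftrightarrow> u \<in> Y \<and> v \<in> Y \<and> path_interior E V u v \<noteq> {} \<and>
       path_interior E V u v \<inter> Y = {}"

definition valid_Z_choice :: "('a \<Rightarrow> 'a \<Rightarrow> bool) \<Rightarrow> 'a set \<Rightarrow> ('a \<Rightarrow> real) \<Rightarrow> 'a set \<Rightarrow> ('a \<Rightarrow> 'a \<Rightarrow> 'a) \<Rightarrow> bool" where
  "valid_Z_choice E V c Y g \<longleftrightarrow> (\<forall>u v. Z_pair E V Y u v \<longrightarrow>
       g u v = g v u \<and> g u v \<in> path_interior E V u v \<and>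
       (\<forall>w\<in>path_interior E V u v. c (g u v) \<le> c w))"

definition Zset :: "('a \<Rightarrow> 'a \<Rightarrow> bool) \<Rightarrow> 'a set \<Rightarrow> 'a set \<Rightarrow> ('a \<Rightarrow> 'a \<Rightarrow> 'a) \<Rightarrow> 'a set" where
  "Zset E V Y g = Y \<union> {g u v | u v. Z_pair E V Y u v}"

definition vertex_ranking :: "('a \<Rightarrow> 'a \<Rightarrow> bool) \<Rightarrow> 'a set \<Rightarrow> ('a \<Rightarrow> nat) \<Rightarrow> bool" where
  "vertex_ranking E S l \<longleftrightarrow> (\<forall>v\<in>S. l v \<ge> 1) \<and>
     (\<forall>u\<in>S. \<forall>v\<in>S. u \<noteq> v \<and> l u = l v \<longrightarrow> (\<exists>z\<in>path_interior E S u v. l z > l v))"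

definition optimal_ranking :: "('a \<Rightarrow> 'a \<Rightarrow> bool) \<Rightarrow> 'a set \<Rightarrow> ('a \<Rightarrow> nat) \<Rightarrow> bool" where
  "optimal_ranking E S l \<longleftrightarrow> vertex_ranking E S l \<and>
     (\<forall>l'. vertex_ranking E S l' \<longrightarrow> card (l ` S) \<le> card (l' ` S))"

inductive ranking_dtree :: "('a \<Rightarrow> 'a \<Rightarrow> bool) \<Rightarrow> ('a \<Rightarrow> nat) \<Rightarrow> 'a set \<Rightarrow> 'a dtree \<Rightarrow> bool"
  for E l where
  "z \<in> S \<Longrightarrow> l z = Max (l ` S) \<Longrightarrow> distinct Cs \<Longrightarrow> set Cs = components E (S - {z}) \<Longrightarrow>
   list_all2 (ranking_dtree E l) Cs ts \<Longrightarrow> ranking_dtree E l S (DNode z ts)"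

end

theory Submission
  imports Defs
begin

text \<open>The set
  S = H \<inter> T' is then a subtree as well, so D is the ranking-based decision tree of S itself.
  Labels strictly decrease along its root-to-leaf paths, so with k the number of labels of an
  optimal ranking of S and all costs at most b \<le> 2a, its cost is at most 2ak. Conversely,
  every decision tree for T induces a vertex ranking of S whose labels are bounded by the largest
  number of vertices of S queried along one root-to-leaf path; as vertices of S cost more than a,
  that path costs at least ak, whence OPT \<ge> ak.\<close>

section \<open>Connectivity\<close>

definition induced_rel :: "('a \<Rightarrow> 'a \<Rightarrow> bool) \<Rightarrow> 'a set \<Rightarrow> ('a \<times> 'a) set" where
  "induced_rel E S = {(x, y). x \<in> S \<and> y \<in> S \<and> E x y}"

lemma connected_on_iff: "connected_on E S \<longleftrightarrow> (\<forall>u\<in>S. \<forall>v\<in>S. (u, v) \<in> (induced_rel E S)\<^sup>*)"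
  unfolding connected_on_def induced_rel_def by simp

lemma induced_rel_rtrancl_mono: "S \<subseteq> T \<Longrightarrow> (induced_rel E S)\<^sup>* \<subseteq> (induced_rel E T)\<^sup>*"
  unfolding induced_rel_def by (rule rtrancl_mono) auto

lemma induced_rel_rtrancl_last_edge:
  assumes "(u, x) \<in> (induced_rel E S)\<^sup>*" "u \<noteq> x"
  shows "x \<in> S \<and> (\<exists>y\<in>S. E y x)"
  using assms by (induction rule: rtrancl_induct) (auto simp: induced_rel_def)

lemma connected_on_Un:
  assumes "connected_on E A" "connected_on E B" "A \<inter> B \<noteq> {}"
  shows "connected_on E (A \<union> B)"
proof -
  obtain z where z: "z \<in> A" "z \<in> B" using assms(3) by blast
  let ?R = "(induced_rel E (A \<union> B))\<^sup>*"
  have "(induced_rel E A)\<^sup>* \<subseteq> ?R" "(induced_rel E B)\<^sup>* \<subseteq> ?R"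
    by (simp_all add: induced_rel_rtrancl_mono)
  then have "(u, z) \<in> ?R \<and> (z, u) \<in> ?R" if "u \<in> A \<union> B" for u
    using that z assms(1,2) unfolding connected_on_iff by blast
  then show ?thesis unfolding connected_on_iff by (meson rtrancl_trans)
qed

lemma connected_on_subsingleton: "(\<forall>u\<in>S. \<forall>v\<in>S. u = v) \<Longrightarrow> connected_on E S"
  unfolding connected_on_iff by auto

lemma connected_on_edge: "E x y \<Longrightarrow> E y x \<Longrightarrow> connected_on E {x, y}"
  unfolding connected_on_iff induced_rel_def by auto

lemma connected_on_Diff_leaf:
  assumes conn: "connected_on E A" and sym: "\<forall>u v. E u v \<longrightarrow> E v u"
    and leaf: "\<forall>w1\<in>A. \<forall>w2\<in>A. E x w1 \<longrightarrow> E x w2 \<longrightarrow> w1 = w2"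
  shows "connected_on E (A - {x})"
  unfolding connected_on_iff
proof (intro ballI)
  fix u v assume u: "u \<in> A - {x}" and v: "v \<in> A - {x}"
  let ?R = "(induced_rel E (A - {x}))\<^sup>*"
  have "(u, v) \<in> (induced_rel E A)\<^sup>*" using conn u v unfolding connected_on_iff by auto
  \<comment> \<open>A walk from u may pass through x only by going to its unique neighbour and straight back.\<close>
  then have "(v \<noteq> x \<longrightarrow> (u, v) \<in> ?R) \<and> (v = x \<longrightarrow> (\<forall>w\<in>A. E x w \<longrightarrow> (u, w) \<in> ?R))"
  proof (induction rule: rtrancl_induct)
    case base
    then show ?case using u by auto
  next
    case (step y z)
    have yz: "y \<in> A" "z \<in> A" "E y z" using step(2) unfolding induced_rel_def by auto
    consider "y = x" | "y \<noteq> x" "z = x" | "y \<noteq> x" "z \<noteq> x" by blast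
    then show ?case
    proof cases
      case 1
      then show ?thesis using step yz sym by auto
    next
      case 2
      then have "w = y" if "w \<in> A" "E x w" for w
        using leaf yz sym that by blast
      then show ?thesis using 2 step by auto
    next
      case 3
      then have "(y, z) \<in> induced_rel E (A - {x})" using yz unfolding induced_rel_def by auto
      then show ?thesis using 3 step by auto
    qed
  qed
  then show "(u, v) \<in> ?R" using v by auto
qed

section \<open>Trees\<close>

lemma finite_edges_on: "finite V \<Longrightarrow> finite (edges_on E V)"
proof -
  assume "finite V"
  have "edges_on E V \<subseteq> (\<lambda>(u, v). {u, v}) ` (V \<times> V)" unfolding edges_on_def by auto
  then show ?thesis using \<open>finite V\<close> by (meson finite_SigmaI finite_imageI finite_subset)
qed

lemma sum_degree_in_eq_twice_card_edges_on:
  assumes fin: "finite V" and irrefl: "\<forall>u. \<not> E u u" and sym: "\<forall>u v. E u v \<longrightarrow> E v u"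
  shows "(\<Sum>u\<in>V. degree_in E V u) = 2 * card (edges_on E V)"
proof -
  let ?P = "SIGMA u:V. {w\<in>V. E u w}"
  let ?f = "\<lambda>(u, w). {u, w}"
  have fibre: "card {p \<in> ?P. ?f p = e} = 2" if edge: "e \<in> edges_on E V" for e
  proof -
    obtain x y where e: "e = {x, y}" "x \<in> V" "y \<in> V" "E x y"
      using edge unfolding edges_on_def by blast
    then have "{p \<in> ?P. ?f p = e} = {(x, y), (y, x)}" "x \<noteq> y"
      using sym irrefl by (auto simp: doubleton_eq_iff)
    then show ?thesis by simp
  qed
  have "(\<Sum>u\<in>V. degree_in E V u) = card ?P"
    using fin by (simp add: degree_in_def)
  also have "\<dots> = (\<Sum>e\<in>?f ` ?P. card {p \<in> ?P. ?f p = e})"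
    using fin sum.image_gen[of ?P "\<lambda>_. 1::nat" ?f] by simp
  also have "?f ` ?P = edges_on E V" unfolding edges_on_def by auto
  also have "(\<Sum>e\<in>edges_on E V. card {p \<in> ?P. ?f p = e}) = 2 * card (edges_on E V)"
    using fibre by simp
  finally show ?thesis .
qed

lemma tree_has_leaf:
  assumes tree: "is_tree E V" and two: "card V \<ge> 2"
  obtains x y where "x \<in> V" "y \<in> V" "E x y" "\<forall>w\<in>V. E x w \<longrightarrow> w = y"
proof -
  have fin: "finite V" and sym: "\<forall>u v. E u v \<longrightarrow> E v u" and conn: "connected_on E V"
    using tree unfolding is_tree_def by auto
  obtain x where x: "x \<in> V" "degree_in E V x \<le> 1"
  proof (rule ccontr)
    assume "\<not> thesis"
    with that have "(\<Sum>u\<in>V. 2) \<le> (\<Sum>u\<in>V. degree_in E V u)"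
      by (intro sum_mono) (metis Suc_1 not_less_eq_eq)
    also have "\<dots> = 2 * (card V - 1)"
      using tree sum_degree_in_eq_twice_card_edges_on unfolding is_tree_def by metis
    finally show False using two by simp
  qed
  have "\<not> (\<forall>u\<in>V. \<forall>v\<in>V. u = v)" using two card_le_Suc0_iff_eq[OF fin] by auto
  then obtain u where u: "u \<in> V" "u \<noteq> x" using x(1) by blast
  then have "(u, x) \<in> (induced_rel E V)\<^sup>*" using conn x(1) unfolding connected_on_iff by blast
  from induced_rel_rtrancl_last_edge[OF this u(2)] obtain y where y: "y \<in> V" "E x y"
    using sym by blast
  have "w = y" if "w \<in> V" "E x w" for w
  proof -
    have "{w, y} \<subseteq> {w\<in>V. E x w}" using that y by auto
    moreover have "finite {w\<in>V. E x w}" using fin by simp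
    ultimately have "card {w, y} \<le> 1"
      using x(2) card_mono unfolding degree_in_def by (meson order_trans)
    then show ?thesis by (cases "w = y") auto
  qed
  then show ?thesis using that x(1) y by blast
qed

lemma is_tree_Diff_leaf:
  assumes tree: "is_tree E V" and x: "x \<in> V" and y: "y \<in> V" "E x y"
    and leaf: "\<forall>w\<in>V. E x w \<longrightarrow> w = y"
  shows "is_tree E (V - {x})"
proof -
  have fin: "finite V" and sym: "\<forall>u v. E u v \<longrightarrow> E v u" and irrefl: "\<forall>u. \<not> E u u"
    and conn: "connected_on E V" and edges: "card (edges_on E V) = card V - 1"
    using tree unfolding is_tree_def by auto
  have "y \<noteq> x" using y(2) irrefl by auto
  have conn': "connected_on E (V - {x})"
    using connected_on_Diff_leaf[OF conn sym] leaf by blast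
  have "edges_on E (V - {x}) = edges_on E V - {{x, y}}"
  proof (intro equalityI subsetI)
    fix e assume "e \<in> edges_on E (V - {x})"
    then show "e \<in> edges_on E V - {{x, y}}" unfolding edges_on_def by blast
  next
    fix e assume e: "e \<in> edges_on E V - {{x, y}}"
    then obtain p q where pq: "e = {p, q}" "p \<in> V" "q \<in> V" "E p q"
      unfolding edges_on_def by blast
    have "p \<noteq> x" using e pq leaf by blast
    moreover have "q \<noteq> x" using e pq leaf sym by (metis insert_commute DiffE singletonI)
    ultimately show "e \<in> edges_on E (V - {x})" using pq unfolding edges_on_def by blast
  qed
  moreover have "{x, y} \<in> edges_on E V" using x y unfolding edges_on_def by auto
  ultimately have "card (edges_on E (V - {x})) = card (V - {x}) - 1"
    using edges x finite_edges_on[OF fin, of E] by (simp add: card_Diff_singleton)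
  then show ?thesis
    using tree \<open>y \<noteq> x\<close> y(1) conn' fin unfolding is_tree_def by auto
qed

lemma connected_on_Diff_tree_leaf:
  assumes A: "connected_on E A" "A \<subseteq> V" and sym: "\<forall>u v. E u v \<longrightarrow> E v u"
    and leaf: "\<forall>w\<in>V. E x w \<longrightarrow> w = y"
  shows "connected_on E (A - {x})"
proof (rule connected_on_Diff_leaf[OF A(1) sym])
  show "\<forall>w1\<in>A. \<forall>w2\<in>A. E x w1 \<longrightarrow> E x w2 \<longrightarrow> w1 = w2" using A(2) leaf by (metis subsetD)
qed

lemma leaf_neighbour_mem:
  assumes C: "connected_on E C" "C \<subseteq> V" and u: "u \<in> C" "u \<noteq> x" and x: "x \<in> C"
    and sym: "\<forall>u v. E u v \<longrightarrow> E v u" and leaf: "\<forall>w\<in>V. E x w \<longrightarrow> w = y"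
  shows "y \<in> C"
proof -
  have "(u, x) \<in> (induced_rel E C)\<^sup>*" using C(1) u(1) x unfolding connected_on_iff by blast
  from induced_rel_rtrancl_last_edge[OF this u(2)] obtain z where "z \<in> C" "E z x" by blast
  moreover from this have "z = y" using C(2) leaf sym by blast
  ultimately show ?thesis by simp
qed

text \<open>Induction on the tree: removing a leaf x keeps both subtrees connected, and if x lies
  in both, so does its unique neighbour.\<close>

lemma connected_on_Int:
  assumes "is_tree E V" "A \<subseteq> V" "B \<subseteq> V" "connected_on E A" "connected_on E B" "A \<inter> B \<noteq> {}"
  shows "connected_on E (A \<inter> B)"
  using assms
proof (induction "card V" arbitrary: V A B rule: less_induct)
  case less
  have fin: "finite V" and sym: "\<forall>u v. E u v \<longrightarrow> E v u" and irrefl: "\<forall>u. \<not> E u u"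
    using less.prems(1) unfolding is_tree_def by auto
  show ?case
  proof (cases "card V \<ge> 2")
    case False
    then have "\<forall>u\<in>V. \<forall>v\<in>V. u = v" using card_le_Suc0_iff_eq[OF fin] by simp
    then show ?thesis using less.prems by (intro connected_on_subsingleton) blast
  next
    case True
    obtain x y where x: "x \<in> V" and y: "y \<in> V" "E x y" and leaf: "\<forall>w\<in>V. E x w \<longrightarrow> w = y"
      using tree_has_leaf[OF less.prems(1) True] by blast
    have A': "connected_on E (A - {x})" and B': "connected_on E (B - {x})"
      using connected_on_Diff_tree_leaf[OF _ _ sym leaf] less.prems(2-5) by simp_all
    have smaller: "card (V - {x}) < card V" using fin x by (meson card_Diff1_less)
    note tree' = is_tree_Diff_leaf[OF less.prems(1) x y leaf]
    show ?thesis
    proof (cases "(A - {x}) \<inter> (B - {x}) = {}")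
      case True
      then show ?thesis by (intro connected_on_subsingleton) blast
    next
      case False
      have IH: "connected_on E ((A - {x}) \<inter> (B - {x}))"
        using less.hyps[OF smaller tree' _ _ A' B' False] less.prems(2,3) by blast
      show ?thesis
      proof (cases "x \<in> A \<inter> B")
        case False
        then have "A \<inter> B = (A - {x}) \<inter> (B - {x})" by blast
        then show ?thesis using IH by simp
      next
        case True
        obtain u where u: "u \<in> A - {x}" "u \<in> B - {x}" using \<open>(A - {x}) \<inter> (B - {x}) \<noteq> {}\<close> by blast
        have yA: "y \<in> A" and yB: "y \<in> B"
          using leaf_neighbour_mem[OF _ _ _ _ _ sym leaf] less.prems(2-5) u True by blast+
        have "y \<noteq> x" using y(2) irrefl by blast
        have "connected_on E ((A - {x}) \<inter> (B - {x}) \<union> {x, y})"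
        proof (rule connected_on_Un[OF IH])
          show "connected_on E {x, y}" using y(2) sym by (simp add: connected_on_edge)
          show "(A - {x}) \<inter> (B - {x}) \<inter> {x, y} \<noteq> {}" using yA yB \<open>y \<noteq> x\<close> by blast
        qed
        moreover have "A \<inter> B = (A - {x}) \<inter> (B - {x}) \<union> {x, y}" using True yA yB by blast
        ultimately show ?thesis by simp
      qed
    qed
  qed
qed

section \<open>Connected components\<close>

lemma in_componentsD: "C \<in> components E X \<Longrightarrow> C \<subseteq> X \<and> C \<noteq> {} \<and> connected_on E C"
  unfolding components_def by blast

lemma component_absorb:
  assumes C: "C \<in> components E X" and D: "D \<subseteq> X" "connected_on E D" and meet: "C \<inter> D \<noteq> {}"
  shows "D \<subseteq> C"
proof -
  have "C \<subseteq> X" "connected_on E C" using in_componentsD[OF C] by auto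
  then have "connected_on E (C \<union> D)" "C \<union> D \<subseteq> X" using connected_on_Un[OF _ D(2) meet] D(1) by auto
  then have "C \<union> D = C" using C unfolding components_def by blast
  then show ?thesis by blast
qed

lemma components_eq:
  assumes C1: "C1 \<in> components E X" and C2: "C2 \<in> components E X" and v: "v \<in> C1" "v \<in> C2"
  shows "C1 = C2"
proof
  show "C2 \<subseteq> C1" using component_absorb[OF C1, of C2] in_componentsD[OF C2] v by blast
  show "C1 \<subseteq> C2" using component_absorb[OF C2, of C1] in_componentsD[OF C1] v by blast
qed

lemma component_exists:
  assumes E_sym: "\<forall>u v. E u v \<longrightarrow> E v u" and v: "v \<in> X"
  obtains C where "C \<in> components E X" "v \<in> C"
proof -
  define C where "C = {u. (v, u) \<in> (induced_rel E X)\<^sup>*}"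
  have vC: "v \<in> C" unfolding C_def by simp
  have reach: "u \<in> X \<and> (v, u) \<in> (induced_rel E C)\<^sup>*" if "(v, u) \<in> (induced_rel E X)\<^sup>*" for u
    using that
  proof (induction rule: rtrancl_induct)
    case (step y z)
    then have "(v, z) \<in> (induced_rel E X)\<^sup>*" by simp
    then have "(y, z) \<in> induced_rel E C" "z \<in> X"
      using step(1,2) unfolding C_def induced_rel_def by auto
    then show ?case using step.IH by (meson rtrancl.rtrancl_into_rtrancl)
  qed (use v in simp)
  have symC: "sym ((induced_rel E C)\<^sup>*)"
    using E_sym by (intro sym_rtrancl) (auto simp: induced_rel_def sym_def)
  have "(x, y) \<in> (induced_rel E C)\<^sup>*" if "x \<in> C" "y \<in> C" for x y
  proof -
    have "(v, x) \<in> (induced_rel E C)\<^sup>*" "(v, y) \<in> (induced_rel E C)\<^sup>*"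
      using reach that unfolding C_def by auto
    then show ?thesis using symC by (meson rtrancl_trans symD)
  qed
  then have connC: "connected_on E C" unfolding connected_on_iff by blast
  have maximal: "D = C" if D: "C \<subseteq> D" "D \<subseteq> X" "connected_on E D" for D
  proof -
    have "d \<in> C" if "d \<in> D" for d
    proof -
      have "(v, d) \<in> (induced_rel E D)\<^sup>*" using D(1,3) vC that unfolding connected_on_iff by blast
      then show ?thesis using induced_rel_rtrancl_mono[OF D(2)] unfolding C_def by blast
    qed
    then show ?thesis using D(1) by blast
  qed
  have "C \<subseteq> X" using reach unfolding C_def by blast
  then have "C \<in> components E X" using vC connC maximal unfolding components_def by blast
  then show ?thesis using that vC by blast
qed

lemma finite_components: "finite X \<Longrightarrow> finite (components E X)"
  by (rule finite_subset[of _ "Pow X"]) (auto simp: components_def)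

definition component_of :: "('a \<Rightarrow> 'a \<Rightarrow> bool) \<Rightarrow> 'a set \<Rightarrow> 'a \<Rightarrow> 'a set" where
  "component_of E X x = (THE C. C \<in> components E X \<and> x \<in> C)"

lemma component_of_eq:
  assumes "C \<in> components E X" "x \<in> C"
  shows "component_of E X x = C"
  unfolding component_of_def
proof (rule the_equality)
  show "C \<in> components E X \<and> x \<in> C" using assms ..
  show "C' = C" if "C' \<in> components E X \<and> x \<in> C'" for C'
    using components_eq[of C' E X C x] that assms by simp
qed

lemma in_component_of:
  assumes "\<forall>u v. E u v \<longrightarrow> E v u" "x \<in> X"
  shows "component_of E X x \<in> components E X" "x \<in> component_of E X x"
proof -
  obtain C where "C \<in> components E X" "x \<in> C" using component_exists[OF assms] .
  moreover from this have "component_of E X x = C" by (rule component_of_eq)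
  ultimately show "component_of E X x \<in> components E X" "x \<in> component_of E X x" by simp_all
qed

lemma path_interior_subset:
  "u \<in> U \<Longrightarrow> v \<in> U \<Longrightarrow> U \<subseteq> W \<Longrightarrow> connected_on E U \<Longrightarrow> path_interior E W u v \<subseteq> U"
  unfolding path_interior_def steiner_def by blast

lemma separator_in_path_interior:
  assumes tree: "is_tree E V" and S: "S \<subseteq> V" "connected_on E S" and W: "W \<subseteq> V" "connected_on E W"
    and C: "C \<in> components E (W - {w})" and u: "u \<in> S \<inter> C" and v: "v \<in> S \<inter> W" "v \<noteq> w" "v \<notin> C"
  shows "w \<in> path_interior E S u v"
proof -
  have CW: "C \<subseteq> W - {w}" using in_componentsD[OF C] by blast
  have "w \<in> U" if U: "{u, v} \<subseteq> U" "U \<subseteq> S" "connected_on E U" for U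
  proof (rule ccontr)
    assume "w \<notin> U"
    have "U \<subseteq> V" using U(2) S(1) by blast
    moreover have meet: "C \<inter> (U \<inter> W) \<noteq> {}" using u U(1) CW by blast
    ultimately have "connected_on E (U \<inter> W)"
      by (intro connected_on_Int[OF tree _ W(1) U(3) W(2)]) blast+
    moreover have "U \<inter> W \<subseteq> W - {w}" using \<open>w \<notin> U\<close> by blast
    ultimately have "U \<inter> W \<subseteq> C" using component_absorb[OF C _ _ meet] by blast
    then show False using v U(1) by blast
  qed
  then have "w \<in> steiner E S {u, v}" unfolding steiner_def by blast
  moreover have "w \<noteq> u" using u CW by blast
  ultimately show ?thesis unfolding path_interior_def using v(2) by blast
qed

section \<open>Decision trees\<close>

lemma list_all2_set_left: "list_all2 P xs ys \<Longrightarrow> x \<in> set xs \<Longrightarrow> \<exists>y\<in>set ys. P x y"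
  by (metis in_set_conv_nth list_all2_conv_all_nth nth_mem)

lemma list_all2_set_right: "list_all2 P xs ys \<Longrightarrow> y \<in> set ys \<Longrightarrow> \<exists>x\<in>set xs. P x y"
  by (metis in_set_conv_nth list_all2_conv_all_nth nth_mem)

lemma is_dtree_exists: "finite W \<Longrightarrow> W \<noteq> {} \<Longrightarrow> \<exists>t. is_dtree E W t"
proof (induction "card W" arbitrary: W rule: less_induct)
  case less
  obtain v where v: "v \<in> W" using less.prems by blast
  obtain Cs where Cs: "set Cs = components E (W - {v})" "distinct Cs"
    using finite_distinct_list[OF finite_components[of "W - {v}" E]] less.prems(1) by blast
  have "\<exists>t. is_dtree E C t" if C: "C \<in> set Cs" for C
  proof -
    have "C \<subseteq> W - {v}" "C \<noteq> {}" using in_componentsD C Cs(1) by blast+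
    moreover from this have "card C < card W"
      using v less.prems(1) by (meson card_Diff1_less card_mono finite_Diff order_le_less_trans)
    ultimately show ?thesis using less.hyps less.prems(1) finite_subset by blast
  qed
  then obtain f where "\<forall>C\<in>set Cs. is_dtree E C (f C)" by metis
  then have "list_all2 (is_dtree E) Cs (map f Cs)"
    by (auto simp: list_all2_conv_all_nth)
  then show ?case using is_dtree.intros[OF v Cs(2) Cs(1)] by blast
qed

lemma finite_dpaths: "finite (dpaths t)"
  by (induction t rule: dpaths.induct) auto

lemma dpaths_nonempty: "dpaths t \<noteq> {}"
  by (cases t) auto

lemma is_dtree_dpaths_subset: "is_dtree E W t \<Longrightarrow> \<forall>p\<in>dpaths t. set p \<subseteq> W"
proof (induction rule: is_dtree.induct)
  case (1 w W Cs ts)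
  have "set p \<subseteq> W" if "t' \<in> set ts" "p \<in> dpaths t'" for t' p
  proof -
    obtain C where "C \<in> set Cs" "\<forall>p\<in>dpaths t'. set p \<subseteq> C"
      using list_all2_set_right[OF 1(4) \<open>t' \<in> set ts\<close>] by blast
    then show ?thesis using in_componentsD[of C E "W - {w}"] 1(3) that(2) by auto
  qed
  then show ?case using 1(1) by auto
qed

lemma ranking_dtree_is_dtree: "ranking_dtree E l S D \<Longrightarrow> is_dtree E S D"
  by (induction rule: ranking_dtree.induct) (auto intro: is_dtree.intros elim: list_all2_mono)

lemma dcost_le_iff: "dcost c D \<le> B \<longleftrightarrow> (\<forall>p\<in>dpaths D. sum_list (map c p) \<le> B)"
  unfolding dcost_def by (simp add: Max_le_iff finite_dpaths dpaths_nonempty)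

lemma sum_list_le_dcost: "p \<in> dpaths D \<Longrightarrow> sum_list (map c p) \<le> dcost c D"
  unfolding dcost_def by (simp add: finite_dpaths)

section \<open>Vertex rankings and decision trees\<close>

lemma vertex_ranking_Max_unique:
  assumes l: "vertex_ranking E S l" and C: "C \<subseteq> S" "finite C" "connected_on E C"
    and z: "z \<in> C" "l z = Max (l ` C)" and u: "u \<in> C" "u \<noteq> z"
  shows "l u < l z"
proof (rule ccontr)
  assume "\<not> l u < l z"
  moreover have "l u \<le> l z" unfolding z(2) using C(2) u(1) by (intro Max_ge) auto
  ultimately have "l u = l z" by simp
  moreover have "u \<in> S" "z \<in> S" using C(1) u(1) z(1) by blast+
  ultimately obtain y where y: "y \<in> path_interior E S u z" "l y > l z"
    using l u(2) unfolding vertex_ranking_def by blast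
  have "path_interior E S u z \<subseteq> C" using path_interior_subset[OF u(1) z(1) C(1,3)] .
  then have "l y \<le> l z" unfolding z(2) using C(2) y(1) by (intro Max_ge) auto
  then show False using y(2) by simp
qed

lemma ranking_dtree_depth:
  assumes l: "vertex_ranking E S l" and fin: "finite S"
  shows "ranking_dtree E l C t \<Longrightarrow> C \<subseteq> S \<Longrightarrow> connected_on E C \<Longrightarrow>
    \<forall>p\<in>dpaths t. length p \<le> card (l ` C)"
proof (induction rule: ranking_dtree.induct)
  case (1 z C Cs ts)
  have finC: "finite C" using fin 1(6) finite_subset by blast
  have "1 \<le> card (l ` C)" using finC 1(1) by (auto simp: Suc_le_eq card_gt_0_iff)
  moreover have "length p \<le> card (l ` C) - 1" if t': "t' \<in> set ts" "p \<in> dpaths t'" for t' p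
  proof -
    obtain C' where C': "C' \<in> set Cs"
      "C' \<subseteq> S \<longrightarrow> connected_on E C' \<longrightarrow> (\<forall>p\<in>dpaths t'. length p \<le> card (l ` C'))"
      using list_all2_set_right[OF 1(5) t'(1)] by blast
    have sub: "C' \<subseteq> C - {z}" and "connected_on E C'"
      using in_componentsD[of C' E "C - {z}"] C'(1) 1(4) by auto
    then have "length p \<le> card (l ` C')" using C'(2) t'(2) 1(6) by blast
    also have "card (l ` C') \<le> card (l ` C - {l z})"
      using sub vertex_ranking_Max_unique[OF l 1(6) finC 1(7,1,2)] finC
      by (intro card_mono) (auto intro!: imageI dest: less_not_refl3)
    also have "\<dots> = card (l ` C) - 1" using 1(1) finC by (simp add: card_Diff_singleton)
    finally show ?thesis .
  qed
  ultimately show ?case by fastforce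
qed

definition max_queries :: "'a set \<Rightarrow> 'a dtree \<Rightarrow> nat" where
  "max_queries S t = Max ((\<lambda>p. length (filter (\<lambda>x. x \<in> S) p)) ` dpaths t)"

lemma max_queries_ge: "p \<in> dpaths t \<Longrightarrow> length (filter (\<lambda>x. x \<in> S) p) \<le> max_queries S t"
  unfolding max_queries_def by (simp add: finite_dpaths)

lemma max_queries_attained:
  obtains p where "p \<in> dpaths t" "length (filter (\<lambda>x. x \<in> S) p) = max_queries S t"
proof -
  have "max_queries S t \<in> (\<lambda>p. length (filter (\<lambda>x. x \<in> S) p)) ` dpaths t"
    unfolding max_queries_def by (intro Max_in) (simp_all add: finite_dpaths dpaths_nonempty)
  then show ?thesis using that by (elim imageE) simp
qed

lemma max_queries_child:
  assumes "t \<in> set ts"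
  shows "max_queries S t + (if v \<in> S then 1 else 0) \<le> max_queries S (DNode v ts)"
proof -
  obtain p where p: "p \<in> dpaths t" "length (filter (\<lambda>x. x \<in> S) p) = max_queries S t"
    using max_queries_attained .
  have "v # p \<in> dpaths (DNode v ts)" using assms p(1) by auto
  then have "length (filter (\<lambda>x. x \<in> S) (v # p)) \<le> max_queries S (DNode v ts)"
    by (rule max_queries_ge)
  then show ?thesis using p(2) by (simp split: if_splits)
qed

lemma max_queries_root: "v \<in> S \<Longrightarrow> 1 \<le> max_queries S (DNode v ts)"
  using max_queries_ge[of "[v]" "DNode v ts" S] by simp

text \<open>The separating vertex is required to lie in W so that rankings of the root subtrees of a
  decision tree can be glued below a new maximal label.\<close>

definition ranking_on :: "('a \<Rightarrow> 'a \<Rightarrow> bool) \<Rightarrow> 'a set \<Rightarrow> 'a set \<Rightarrow> nat \<Rightarrow> ('a \<Rightarrow> nat) \<Rightarrow> bool" where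
  "ranking_on E S W k l \<longleftrightarrow> (\<forall>v\<in>S \<inter> W. l v \<in> {1..k}) \<and>
     (\<forall>u\<in>S \<inter> W. \<forall>v\<in>S \<inter> W. u \<noteq> v \<and> l u = l v \<longrightarrow> (\<exists>z\<in>path_interior E S u v \<inter> W. l v < l z))"

lemma ranking_on_glue:
  assumes tree: "is_tree E V" and S: "S \<subseteq> V" "connected_on E S" and W: "W \<subseteq> V" "connected_on E W"
    and w: "w \<in> W"
    and L: "\<And>C. C \<in> components E (W - {w}) \<Longrightarrow> ranking_on E S C (k C) (L C)"
    and k: "\<And>C. C \<in> components E (W - {w}) \<Longrightarrow> k C + (if w \<in> S then 1 else 0) \<le> h"
    and h: "w \<in> S \<Longrightarrow> 1 \<le> h"
  shows "ranking_on E S W h (\<lambda>x. if x = w then h else L (component_of E (W - {w}) x) x)"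
proof -
  have sym: "\<forall>u v. E u v \<longrightarrow> E v u" using tree unfolding is_tree_def by blast
  define K where "K = component_of E (W - {w})"
  define l where "l = (\<lambda>x. if x = w then h else L (K x) x)"
  have K: "K x \<in> components E (W - {w})" "x \<in> K x" if "x \<in> W" "x \<noteq> w" for x
    using in_component_of[OF sym, of x "W - {w}"] that unfolding K_def by simp_all
  have below: "1 \<le> l x \<and> l x + (if w \<in> S then 1 else 0) \<le> h" if x: "x \<in> S \<inter> W" "x \<noteq> w" for x
  proof -
    have Kx: "K x \<in> components E (W - {w})" "x \<in> S \<inter> K x" using K x by auto
    then have "L (K x) x \<in> {1..k (K x)}" using L[OF Kx(1)] unfolding ranking_on_def by blast
    then show ?thesis using k[OF Kx(1)] x(2) unfolding l_def by auto
  qed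
  have "l v \<in> {1..h}" if "v \<in> S \<inter> W" for v
    using below[OF that] h that by (cases "v = w") (auto simp: l_def)
  moreover have "\<exists>z\<in>path_interior E S u v \<inter> W. l v < l z"
    if uv: "u \<in> S \<inter> W" "v \<in> S \<inter> W" "u \<noteq> v" "l u = l v" for u v
  proof -
    have "u \<noteq> w" "v \<noteq> w" using below[OF uv(1)] below[OF uv(2)] uv by (auto simp: l_def)
    have Ku: "K u \<in> components E (W - {w})" "u \<in> K u" using K uv(1) \<open>u \<noteq> w\<close> by auto
    have KuW: "K u \<subseteq> W - {w}" using in_componentsD[OF Ku(1)] by blast
    show ?thesis
    proof (cases "v \<in> K u")
      case True
      have "K v = K u" using component_of_eq[OF Ku(1) True] unfolding K_def .
      then have "L (K u) u = L (K u) v" using uv(4) \<open>u \<noteq> w\<close> \<open>v \<noteq> w\<close> by (simp add: l_def)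
      moreover have "u \<in> S \<inter> K u" "v \<in> S \<inter> K u" using uv(1,2) Ku(2) True by blast+
      ultimately obtain z where z: "z \<in> path_interior E S u v \<inter> K u" "L (K u) v < L (K u) z"
        using L[OF Ku(1)] uv(3) unfolding ranking_on_def by blast
      have "K z = K u" using component_of_eq[OF Ku(1)] z(1) unfolding K_def by blast
      moreover have "z \<in> W" "z \<noteq> w" using z(1) KuW by blast+
      ultimately show ?thesis using z \<open>K v = K u\<close> \<open>v \<noteq> w\<close> by (auto simp: l_def)
    next
      case False
      then have wuv: "w \<in> path_interior E S u v"
        using separator_in_path_interior[OF tree S W Ku(1)] uv(1,2) \<open>v \<noteq> w\<close> Ku(2) by blast
      then have "w \<in> S" using path_interior_subset[of u S v S E] uv(1,2) S(2) by blast
      then have "l v < l w" using below[OF uv(2) \<open>v \<noteq> w\<close>] by (simp add: l_def)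
      then show ?thesis using wuv w by blast
    qed
  qed
  ultimately have "ranking_on E S W h l" unfolding ranking_on_def by blast
  then show ?thesis unfolding l_def K_def .
qed

text \<open>Labelling each vertex of S by the largest number of S-vertices queried on a path of the
  subtree it roots turns any decision tree into a vertex ranking of S.\<close>

lemma dtree_ranking_on:
  assumes tree: "is_tree E V" and S: "S \<subseteq> V" "connected_on E S"
  shows "is_dtree E W t \<Longrightarrow> W \<subseteq> V \<Longrightarrow> connected_on E W \<Longrightarrow> \<exists>l. ranking_on E S W (max_queries S t) l"
proof (induction rule: is_dtree.induct)
  case (1 w W Cs ts)
  have "\<exists>t'\<in>set ts. \<exists>l. ranking_on E S C (max_queries S t') l" if C: "C \<in> set Cs" for C
  proof -
    have "C \<subseteq> V" "connected_on E C" using in_componentsD[of C E "W - {w}"] C 1(3) 1(5) by auto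
    then show ?thesis using list_all2_set_left[OF 1(4) C] by blast
  qed
  then obtain T L where T: "\<And>C. C \<in> set Cs \<Longrightarrow> T C \<in> set ts"
    and L: "\<And>C. C \<in> set Cs \<Longrightarrow> ranking_on E S C (max_queries S (T C)) (L C)"
    by metis
  have "ranking_on E S W (max_queries S (DNode w ts))
      (\<lambda>x. if x = w then max_queries S (DNode w ts) else L (component_of E (W - {w}) x) x)"
  proof (rule ranking_on_glue[OF tree S 1(5,6) 1(1), where k = "\<lambda>C. max_queries S (T C)"])
    fix C assume "C \<in> components E (W - {w})"
    then have C: "C \<in> set Cs" using 1(3) by simp
    show "ranking_on E S C (max_queries S (T C)) (L C)" by (rule L[OF C])
    show "max_queries S (T C) + (if w \<in> S then 1 else 0) \<le> max_queries S (DNode w ts)"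
      by (rule max_queries_child[OF T[OF C]])
  qed (rule max_queries_root)
  then show ?case by blast
qed

lemma ranking_on_vertex_ranking:
  assumes l: "ranking_on E S W k l" and SW: "S \<subseteq> W"
  shows "vertex_ranking E S l \<and> l ` S \<subseteq> {1..k}"
proof -
  have labels: "l v \<in> {1..k}" if "v \<in> S" for v
    using l that SW unfolding ranking_on_def by blast
  have "\<exists>z\<in>path_interior E S u v. l v < l z" if "u \<in> S" "v \<in> S" "u \<noteq> v" "l u = l v" for u v
    using l that SW unfolding ranking_on_def by blast
  with labels show ?thesis unfolding vertex_ranking_def by auto
qed

lemma optimal_ranking_card_le_max_queries:
  assumes tree: "is_tree E V" and S: "S \<subseteq> V" "connected_on E S"
    and l: "optimal_ranking E S l" and t: "is_dtree E V t"
  shows "card (l ` S) \<le> max_queries S t"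
proof -
  have "connected_on E V" using tree unfolding is_tree_def by blast
  then obtain l' where l': "ranking_on E S V (max_queries S t) l'"
    using dtree_ranking_on[OF tree S t] by blast
  have "vertex_ranking E S l'" "l' ` S \<subseteq> {1..max_queries S t}"
    using ranking_on_vertex_ranking[OF l' S(1)] by auto
  then have "card (l ` S) \<le> card (l' ` S)" using l unfolding optimal_ranking_def by blast
  also have "\<dots> \<le> card {1..max_queries S t}" using \<open>l' ` S \<subseteq> _\<close> by (intro card_mono) auto
  finally show ?thesis by simp
qed

section \<open>Cost bounds\<close>

lemma count_mult_le_sum_list:
  fixes c :: "'a \<Rightarrow> real"
  assumes "\<forall>x\<in>set p. 0 \<le> c x" "\<forall>x\<in>set p. x \<in> S \<longrightarrow> a \<le> c x"
  shows "a * length (filter (\<lambda>x. x \<in> S) p) \<le> sum_list (map c p)"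
  using assms by (induction p) (auto simp: distrib_left add_mono add_increasing)

lemma OPT_ge_optimal_ranking:
  fixes a :: real
  assumes tree: "is_tree E V" and c: "\<forall>v\<in>V. 0 \<le> c v" and S: "S \<subseteq> V" "connected_on E S"
    and a: "0 \<le> a" "\<forall>v\<in>S. a \<le> c v" and l: "optimal_ranking E S l"
  shows "a * card (l ` S) \<le> OPT E V c"
  unfolding OPT_def
proof (rule cINF_greatest)
  have "finite V" "V \<noteq> {}" using tree unfolding is_tree_def by blast+
  then show "{t. is_dtree E V t} \<noteq> {}" using is_dtree_exists by blast
  fix t assume "t \<in> {t. is_dtree E V t}"
  then have t: "is_dtree E V t" by simp
  obtain p where p: "p \<in> dpaths t" "length (filter (\<lambda>x. x \<in> S) p) = max_queries S t"
    using max_queries_attained .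
  have "set p \<subseteq> V" using is_dtree_dpaths_subset[OF t] p(1) by blast
  then have "\<forall>x\<in>set p. 0 \<le> c x" "\<forall>x\<in>set p. x \<in> S \<longrightarrow> a \<le> c x" using c a(2) by blast+
  then have "a * max_queries S t \<le> sum_list (map c p)"
    using count_mult_le_sum_list[of p c S a] p(2) by simp
  moreover have "a * card (l ` S) \<le> a * max_queries S t"
    using optimal_ranking_card_le_max_queries[OF tree S l t] a(1) by (intro mult_left_mono) simp_all
  ultimately show "a * card (l ` S) \<le> dcost c t" using sum_list_le_dcost[OF p(1), of c] by linarith
qed

lemma dcost_ranking_dtree_le:
  assumes l: "vertex_ranking E S l" and S: "finite S" "connected_on E S"
    and D: "ranking_dtree E l S D" and b: "0 \<le> b" "\<forall>v\<in>S. c v \<le> b"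
  shows "dcost c D \<le> b * card (l ` S)"
  unfolding dcost_le_iff
proof
  fix p assume p: "p \<in> dpaths D"
  have "set p \<subseteq> S" using is_dtree_dpaths_subset[OF ranking_dtree_is_dtree[OF D]] p by blast
  then have "sum_list (map c p) \<le> sum_list (map (\<lambda>_. b) p)" using b(2) by (intro sum_list_mono) blast
  also have "\<dots> = length p * b" by (simp add: sum_list_triv)
  also have "\<dots> \<le> card (l ` S) * b"
    using ranking_dtree_depth[OF l S(1) D order_refl S(2)] p b(1) by (simp add: mult_right_mono)
  finally show "sum_list (map c p) \<le> b * card (l ` S)" by (simp add: mult.commute)
qed

theorem lemma13:
  fixes E :: "'a \<Rightarrow> 'a \<Rightarrow> bool" and V :: "'a set" and c :: "'a \<Rightarrow> real"
    and a b :: real and X T' H :: "'a set" and g :: "'a \<Rightarrow> 'a \<Rightarrow> 'a"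
    and l :: "'a \<Rightarrow> nat" and D :: "'a dtree"
  assumes tree: "is_tree E V"
    and cpos: "\<forall>v\<in>V. c v > 0"
    and a_pos: "0 < a" and ab: "a < b"
    and cb: "\<forall>v\<in>V. c v \<le> b" and b2a: "b \<le> 2 * a"
    and light: "\<exists>v\<in>V. c v \<le> a"
    and X: "valid_X E V c a X"
    and g: "valid_Z_choice E V c (Yset E V X) g"
    and T': "T' \<in> components E (V - Zset E V (Yset E V X) g)"
    and H: "heavy_module E V c a H" and HT': "H \<inter> T' \<noteq> {}"
    and l: "optimal_ranking E (steiner E T' (H \<inter> T')) l"
    and D: "ranking_dtree E l (steiner E T' (H \<inter> T')) D"
  shows "dcost c D \<le> 2 * OPT E V c"
proof -
  define S where "S = H \<inter> T'"
  have T'V: "T' \<subseteq> V" "connected_on E T'" using in_componentsD[OF T'] by auto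
  have HV: "H \<subseteq> V" "connected_on E H" "\<forall>v\<in>H. a < c v"
    using H unfolding heavy_module_def by auto
  have SV: "S \<subseteq> V" using HV(1) unfolding S_def by blast
  have Sc: "connected_on E S" unfolding S_def by (rule connected_on_Int[OF tree HV(1) T'V(1) HV(2) T'V(2) HT'])
  have "steiner E T' S = S" unfolding steiner_def S_def using Sc S_def by blast
  then have lS: "optimal_ranking E S l" and DS: "ranking_dtree E l S D"
    using l D unfolding S_def by simp_all
  have "finite S" using tree SV finite_subset unfolding is_tree_def by blast
  have "vertex_ranking E S l" using lS unfolding optimal_ranking_def by blast
  then have "dcost c D \<le> b * card (l ` S)"
    by (rule dcost_ranking_dtree_le[OF _ \<open>finite S\<close> Sc DS]) (use SV cb a_pos ab in auto)
  also have "\<dots> \<le> 2 * (a * card (l ` S))"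
    using mult_right_mono[OF b2a, of "card (l ` S)"] by simp
  also have "a * card (l ` S) \<le> OPT E V c"
    using OPT_ge_optimal_ranking[OF tree _ SV Sc _ _ lS] cpos a_pos HV(3) unfolding S_def
    by (auto simp: less_imp_le)
  finally show ?thesis by simp
qed

end
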